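(* Let $K\in\mathbb{N}^+$, let $a_1,\dots,a_K\in\mathbb{R}$ be rationally independent, and let $g:\mathbb{R}\to\mathbb{R}$ be periodic with period $T$, i.e. $g(x+T)=g(x)$ for all $x$. Assume there exist $x_1,x_2\in\mathbb{R}$ with $0<x_2-x_1<T$ such that $g$ is continuous on $[x_1,x_2]$, and set $M_1=\min_{x\in[x_1,x_2]}g(x)$, $M_2=\max_{x\in[x_1,x_2]}g(x)$. Then the set $\{[g(wa_1),g(wa_2),\dots,g(wa_K)]^T: w\in\mathbb{R}\}$ is dense in $[M_1,M_2]^K$, i.e., for every $\boldsymbol{\xi}\in[M_1,M_2]^K$ and every $\varepsilon>0$ there is $w\in\mathbb{R}$ with $\max_{k}|g(wa_k)-\xi_k|<\varepsilon$.
   Context: Real numbers $a_1,\dots,a_K$ are rationally independent if whenever $\lambda_1,\dots,\lambda_K\in\mathbb{Q}$ satisfy $\sum_{k=1}^K\lambda_k a_k=0$, then $\lambda_1=\dots=\lambda_K=0$. *)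

theory Defs
  imports "HOL-Analysis.Analysis"
begin

definition rationally_independent :: "nat \<Rightarrow> (nat \<Rightarrow> real) \<Rightarrow> bool" where
  "rationally_independent K a \<longleftrightarrow>
     (\<forall>c :: nat \<Rightarrow> real. (\<forall>k\<in>{1..K}. c k \<in> \<rat>) \<and> (\<Sum>k=1..K. c k * a k) = 0
        \<longrightarrow> (\<forall>k\<in>{1..K}. c k = 0))"

end

theory Submission
  imports Defs "HOL-Library.Periodic_Fun"
begin

text \<open>Each target \<xi> k is a value g (y k) with y k \<in> [x1, x2], and by uniform continuity g stays
  \<epsilon>-close to \<xi> k on a whole \<eta>-ball around some point c k, with \<eta> independent of k.
  The frequencies a k are linearly independent over \<int>, so Kronecker's theorem gives one w
  with w * a k within \<eta> of c k modulo T for all k simultaneously; periodicity of g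
  finishes the argument.\<close>

lemma rationally_independentD:
  assumes "rationally_independent K a" and "\<forall>k\<in>{1..K}. c k \<in> \<rat>"
    and "(\<Sum>k=1..K. c k * a k) = 0" and "k \<in> {1..K}"
  shows "c k = 0"
  using assms unfolding rationally_independent_def by blast

lemma rationally_independent_inj_on:
  assumes "rationally_independent K a"
  shows "inj_on (\<lambda>i. a (Suc i)) {..<K}"
proof (rule inj_onI, rule ccontr)
  fix i j assume "i \<in> {..<K}" "j \<in> {..<K}" "a (Suc i) = a (Suc j)" "i \<noteq> j"
  define c :: "nat \<Rightarrow> real" where "c = (\<lambda>k. if k = Suc i then 1 else if k = Suc j then -1 else 0)"
  have "(\<Sum>k=1..K. c k * a k) = (\<Sum>k\<in>{Suc i, Suc j}. c k * a k)"
    by (rule sum.mono_neutral_right) (use \<open>i \<in> {..<K}\<close> \<open>j \<in> {..<K}\<close> in \<open>auto simp: c_def\<close>)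
  also have "\<dots> = 0"
    using \<open>i \<noteq> j\<close> \<open>a (Suc i) = a (Suc j)\<close> by (simp add: c_def)
  finally have rel: "(\<Sum>k=1..K. c k * a k) = 0" .
  have "\<forall>k\<in>{1..K}. c k \<in> \<rat>"
    by (auto simp: c_def)
  from rationally_independentD[OF assms this rel] \<open>i \<in> {..<K}\<close> have "c (Suc i) = 0"
    by simp
  then show False
    by (simp add: c_def)
qed

lemma rationally_independent_int_independent:
  assumes "rationally_independent K a"
  shows "module.independent (\<lambda>r. (*) (real_of_int r)) ((\<lambda>i. a (Suc i)) ` {..<K})"
proof
  interpret module "\<lambda>r. (*) (real_of_int r)"
    by (simp add: module.intro distrib_left mult.commute)
  let ?S = "(\<lambda>i. a (Suc i)) ` {..<K}"
  assume "dependent ?S"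
  then obtain u where u: "\<exists>v\<in>?S. u v \<noteq> 0" and rel: "(\<Sum>v\<in>?S. real_of_int (u v) * v) = 0"
    by (auto simp: dependent_finite)
  define c where "c k = real_of_int (u (a k))" for k
  have "(\<Sum>k=1..K. c k * a k) = (\<Sum>i<K. c (Suc i) * a (Suc i))"
    by (simp add: sum.atLeast1_atMost_eq)
  also have "\<dots> = (\<Sum>v\<in>?S. real_of_int (u v) * v)"
    by (simp add: sum.reindex[OF rationally_independent_inj_on[OF assms]] c_def)
  finally have "(\<Sum>k=1..K. c k * a k) = 0"
    using rel by simp
  moreover have "\<forall>k\<in>{1..K}. c k \<in> \<rat>"
    by (simp add: c_def)
  ultimately have "c (Suc i) = 0" if "i < K" for i
    using rationally_independentD[OF assms] that by simp
  then show False
    using u by (auto simp: c_def)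
qed

lemma Kronecker_approx_modulo:
  assumes "rationally_independent K a" and "T \<noteq> 0" and "\<epsilon> > 0"
  obtains w h where "\<And>k. k \<in> {1..K} \<Longrightarrow> \<bar>w * a k - of_int (h k) * T - y k\<bar> < \<epsilon>"
proof -
  obtain t h where th: "\<And>i. i < K \<Longrightarrow> \<bar>t * a (Suc i) - of_int (h i) - y (Suc i) / T\<bar> < \<epsilon> / \<bar>T\<bar>"
    using Kronecker_thm_1[OF rationally_independent_int_independent[OF assms(1)]
        rationally_independent_inj_on[OF assms(1)], of "\<epsilon> / \<bar>T\<bar>" "\<lambda>i. y (Suc i) / T"] assms(2,3)
    by auto
  have "\<bar>(t * T) * a k - of_int (h (k - 1)) * T - y k\<bar> < \<epsilon>" if "k \<in> {1..K}" for k
  proof -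
    obtain i where "k = Suc i" "i < K"
      using \<open>k \<in> {1..K}\<close> by (cases k) auto
    have "(t * T) * a k - of_int (h (k - 1)) * T - y k = T * (t * a k - of_int (h (k - 1)) - y k / T)"
      using assms(2) by (simp add: field_simps)
    moreover have "\<bar>t * a k - of_int (h (k - 1)) - y k / T\<bar> < \<epsilon> / \<bar>T\<bar>"
      using th[OF \<open>i < K\<close>] \<open>k = Suc i\<close> by simp
    ultimately show ?thesis
      using assms(2) by (simp add: abs_mult pos_less_divide_eq mult.commute)
  qed
  then show thesis
    by (rule that)
qed

lemma continuous_on_Icc_image:
  fixes g :: "real \<Rightarrow> real"
  assumes "a \<le> b" and "continuous_on {a..b} g"
  shows "g ` {a..b} = {(INF x\<in>{a..b}. g x)..(SUP x\<in>{a..b}. g x)}"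
proof -
  obtain c d where "g ` {a..b} = {c..d}" "c \<le> d"
    using continuous_image_closed_interval[OF assms] by blast
  then show ?thesis
    by simp
qed

lemma continuous_on_Icc_values_approx_on_ball:
  fixes g :: "real \<Rightarrow> real"
  assumes "a < b" and "continuous_on {a..b} g" and "\<epsilon> > 0"
  obtains \<eta> where "\<eta> > 0"
    and "\<And>\<xi>. \<xi> \<in> {(INF x\<in>{a..b}. g x)..(SUP x\<in>{a..b}. g x)} \<Longrightarrow>
           \<exists>c. \<forall>z. \<bar>z - c\<bar> < \<eta> \<longrightarrow> \<bar>g z - \<xi>\<bar> < \<epsilon>"
proof -
  have "uniformly_continuous_on {a..b} g"
    using assms(2) by (rule compact_uniformly_continuous) simp
  then obtain \<delta> where "\<delta> > 0"
    and \<delta>: "\<forall>x\<in>{a..b}. \<forall>y\<in>{a..b}. dist y x < \<delta> \<longrightarrow> dist (g y) (g x) < \<epsilon>"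
    using assms(3) unfolding uniformly_continuous_on_def by blast
  define \<eta> where "\<eta> = min \<delta> (b - a) / 2"
  have "\<eta> > 0" "2 * \<eta> \<le> \<delta>" "2 * \<eta> \<le> b - a"
    using \<open>\<delta> > 0\<close> assms(1) by (auto simp: \<eta>_def min_def)
  moreover have "\<exists>c. \<forall>z. \<bar>z - c\<bar> < \<eta> \<longrightarrow> \<bar>g z - \<xi>\<bar> < \<epsilon>"
    if "\<xi> \<in> {(INF x\<in>{a..b}. g x)..(SUP x\<in>{a..b}. g x)}" for \<xi>
  proof -
    have "\<xi> \<in> g ` {a..b}"
      using that by (subst continuous_on_Icc_image[OF less_imp_le[OF assms(1)] assms(2)])
    then obtain y where y: "y \<in> {a..b}" "g y = \<xi>"
      by blast
    \<comment> \<open>y moved at least \<eta> away from the endpoints, so the \<eta>-ball around c lies in [a, b]\<close>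
    define c where "c = max (a + \<eta>) (min (b - \<eta>) y)"
    have "z \<in> {a..b} \<and> \<bar>z - y\<bar> < \<delta>" if "\<bar>z - c\<bar> < \<eta>" for z
    proof -
      have "a + \<eta> \<le> c" "c \<le> b - \<eta>" "\<bar>c - y\<bar> \<le> \<eta>"
        using y(1) \<open>\<eta> > 0\<close> \<open>2 * \<eta> \<le> b - a\<close> by (auto simp: c_def max_def min_def)
      then show ?thesis
        using that \<open>2 * \<eta> \<le> \<delta>\<close> by (auto simp: abs_less_iff)
    qed
    then show ?thesis
      using \<delta> y by (auto simp: dist_real_def intro!: exI[of _ c])
  qed
  ultimately show thesis
    using that by blast
qed

theorem lemma19:
  fixes K :: nat and a :: "nat \<Rightarrow> real" and g :: "real \<Rightarrow> real"
    and T x1 x2 :: real and \<xi> :: "nat \<Rightarrow> real" and \<epsilon> :: real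
  assumes "K \<ge> 1"
    and "rationally_independent K a"
    and "\<forall>x. g (x + T) = g x"
    and "0 < x2 - x1" and "x2 - x1 < T"
    and "continuous_on {x1..x2} g"
    and "\<forall>k\<in>{1..K}. \<xi> k \<in> {(INF x\<in>{x1..x2}. g x) .. (SUP x\<in>{x1..x2}. g x)}"
    and "\<epsilon> > 0"
  shows "\<exists>w::real. (MAX k\<in>{1..K}. \<bar>g (w * a k) - \<xi> k\<bar>) < \<epsilon>"
proof -
  have "T \<noteq> 0" \<comment> \<open>the only use of the hypothesis x2 - x1 < T\<close>
    using assms(4,5) by linarith
  obtain \<eta> where "\<eta> > 0" and approx:
    "\<And>\<xi>. \<xi> \<in> {(INF x\<in>{x1..x2}. g x)..(SUP x\<in>{x1..x2}. g x)} \<Longrightarrow>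
       \<exists>c. \<forall>z. \<bar>z - c\<bar> < \<eta> \<longrightarrow> \<bar>g z - \<xi>\<bar> < \<epsilon>"
    using continuous_on_Icc_values_approx_on_ball[OF _ assms(6,8)] assms(4) by auto
  have "\<forall>k\<in>{1..K}. \<exists>c. \<forall>z. \<bar>z - c\<bar> < \<eta> \<longrightarrow> \<bar>g z - \<xi> k\<bar> < \<epsilon>"
    using approx assms(7) by blast
  then obtain c where c: "\<And>k z. k \<in> {1..K} \<Longrightarrow> \<bar>z - c k\<bar> < \<eta> \<Longrightarrow> \<bar>g z - \<xi> k\<bar> < \<epsilon>"
    by metis
  obtain w h where wh: "\<And>k. k \<in> {1..K} \<Longrightarrow> \<bar>w * a k - of_int (h k) * T - c k\<bar> < \<eta>"
    using Kronecker_approx_modulo[OF assms(2) \<open>T \<noteq> 0\<close> \<open>\<eta> > 0\<close>] by blast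
  interpret periodic_fun_simple g T
    using assms(3) by unfold_locales simp
  have "\<bar>g (w * a k) - \<xi> k\<bar> < \<epsilon>" if "k \<in> {1..K}" for k
    using c[OF that wh[OF that]] plus_of_int[of "w * a k - of_int (h k) * T" "h k"] by simp
  then show ?thesis
    using assms(1) by (intro exI[of _ w]) (simp add: Max_less_iff)
qed

end
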